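(* Let $(\vec b_1,\ldots,\vec b_d)$ be an HKZ-reduced basis of a lattice of dimension $d\ge2$. If $x_1,x_2$ are real numbers with $1\le x_1<x_2<d$, then $$\tilde\pi_{[x_2,d]}\ge \sqrt d^{\,\log\frac{d-x_2}{d-x_1}}\cdot\tilde\pi_{[x_1,d]}.$$
   Context: Logarithms are natural. Gram–Schmidt: $\vec b_i^*=\vec b_i-\sum_{j<i}\mu_{i,j}\vec b_j^*$, $\mu_{i,j}=\langle\vec b_i,\vec b_j^*\rangle/\|\vec b_j^*\|^2$. HKZ-reduced: size-reduced ($|\mu_{i,j}|\le1/2$), $\vec b_1$ a shortest nonzero lattice vector, and projections of $\vec b_2,\ldots,\vec b_d$ orthogonally to $\vec b_1$ HKZ-reduced. For real $a$ and integer $b$ with $1\le a<b\le d$, $$\tilde\pi_{[a,b]}=\Big(\|\vec b_{\lfloor a\rfloor}^*\|^{1-a+\lfloor a\rfloor}\prod_{i=\lfloor a\rfloor+1}^{b}\|\vec b_i^*\|\Big)^{\frac{1}{b+1-a}}.$$ *)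

theory Defs
  imports "HOL-Analysis.Analysis"
begin

text \<open>Bases are lists of vectors in Euclidean space, index i (1-based in the paper)
  corresponds to list position i-1.\<close>

fun gso_aux :: "(real^'n) list \<Rightarrow> (real^'n) list \<Rightarrow> (real^'n) list" where
  "gso_aux acc [] = acc"
| "gso_aux acc (b # bs) =
     gso_aux (acc @ [b - (\<Sum>v\<leftarrow>acc. ((b \<bullet> v) / (norm v)^2) *\<^sub>R v)]) bs"

definition gso :: "(real^'n) list \<Rightarrow> (real^'n) list" where
  "gso bs = gso_aux [] bs"

text \<open>Gram--Schmidt coefficient mu_{i,j} (0-based list indices).\<close>
definition gs_mu :: "(real^'n) list \<Rightarrow> nat \<Rightarrow> nat \<Rightarrow> real" where
  "gs_mu bs i j = (bs ! i \<bullet> gso bs ! j) / (norm (gso bs ! j))^2"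

definition size_reduced :: "(real^'n) list \<Rightarrow> bool" where
  "size_reduced bs = (\<forall>i<length bs. \<forall>j<i. \<bar>gs_mu bs i j\<bar> \<le> 1/2)"

definition lattice_of :: "(real^'n) list \<Rightarrow> (real^'n) set" where
  "lattice_of bs = {(\<Sum>i<length bs. of_int (z i) *\<^sub>R (bs ! i)) | z. True}"

definition shortest_in :: "real^'n \<Rightarrow> (real^'n) set \<Rightarrow> bool" where
  "shortest_in v L = (v \<in> L \<and> v \<noteq> 0 \<and> (\<forall>w\<in>L. w \<noteq> 0 \<longrightarrow> norm v \<le> norm w))"

definition proj_perp :: "real^'n \<Rightarrow> real^'n \<Rightarrow> real^'n" where
  "proj_perp b v = v - ((v \<bullet> b) / (norm b)^2) *\<^sub>R b"

fun hkz :: "(real^'n) list \<Rightarrow> bool" where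
  "hkz [] = True"
| "hkz (b # bs) = (size_reduced (b # bs) \<and> shortest_in b (lattice_of (b # bs))
                   \<and> hkz (map (proj_perp b) bs))"

definition lattice_basis :: "(real^'n) list \<Rightarrow> bool" where
  "lattice_basis bs = (distinct bs \<and> independent (set bs))"

text \<open>||b_i*|| for 1-based index i.\<close>
definition bstar_norm :: "(real^'n) list \<Rightarrow> nat \<Rightarrow> real" where
  "bstar_norm bs i = norm (gso bs ! (i - 1))"

definition tpi :: "(real^'n) list \<Rightarrow> real \<Rightarrow> nat \<Rightarrow> real" where
  "tpi bs a b = (bstar_norm bs (nat \<lfloor>a\<rfloor>) powr (1 - a + of_int \<lfloor>a\<rfloor>)
      * (\<Prod>i = nat \<lfloor>a\<rfloor> + 1 .. b. bstar_norm bs i)) powr (1 / (real b + 1 - a))"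

end

theory Submission
  imports Defs
begin

text \<open>Write \<open>l\<^sub>i = ln \<parallel>b\<^sub>i\<^sup>*\<parallel>\<close>, so that \<open>ln \<pi>\<^sub>[\<^sub>x\<^sub>,\<^sub>d\<^sub>]\<close> is the mean of the step function \<open>l\<close>
  over \<open>[x, d + 1)\<close>. The first vector of the \<open>k\<close>-th projected basis of an HKZ basis is
  \<open>b\<^sub>k\<^sup>*\<close>, a shortest vector of a lattice whose Gram--Schmidt norms are
  \<open>\<parallel>b\<^sub>k\<^sup>*\<parallel>, \<dots>, \<parallel>b\<^sub>d\<^sup>*\<parallel>\<close>, so Minkowski's bound gives
  \<open>l\<^sub>k \<le> ln n / 2 + (l\<^sub>k + \<dots> + l\<^sub>d) / n\<close> with \<open>n = d + 1 - k\<close>. On each interval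
  \<open>[k, k + 1]\<close> the mean is a Moebius function of \<open>x\<close>, and this inequality makes
  \<open>x \<mapsto> ln \<pi>\<^sub>[\<^sub>x\<^sub>,\<^sub>d\<^sub>] - (ln d / 2) ln (d - x)\<close> nondecreasing on \<open>[1, d)\<close>; exponentiating
  its increase from \<open>x\<^sub>1\<close> to \<open>x\<^sub>2\<close> gives the claim. Minkowski's bound is proved by a
  pigeonhole argument on boxes in Gram--Schmidt coordinates.\<close>

section \<open>Gram--Schmidt orthogonalisation\<close>

definition gs_residual :: "'a::real_inner list \<Rightarrow> 'a \<Rightarrow> 'a" where
  "gs_residual g x = x - (\<Sum>v\<leftarrow>g. ((x \<bullet> v) / (norm v)^2) *\<^sub>R v)"

definition orthogonal_list :: "'a::real_inner list \<Rightarrow> bool" where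
  "orthogonal_list g \<longleftrightarrow> (\<forall>i<length g. \<forall>j<length g. i \<noteq> j \<longrightarrow> g ! i \<bullet> g ! j = 0)"

lemma gs_residual_orthogonal:
  assumes "orthogonal_list g" and "m < length g"
  shows "gs_residual g x \<bullet> g ! m = 0"
proof -
  have "(\<Sum>v\<leftarrow>g. ((x \<bullet> v) / (norm v)^2) *\<^sub>R v) \<bullet> g ! m
      = (\<Sum>i<length g. ((x \<bullet> g!i) / (norm (g!i))^2) * (g ! i \<bullet> g ! m))"
    by (simp add: sum_list_sum_nth atLeast0LessThan inner_sum_left)
  also have "\<dots> = (\<Sum>i\<in>{m}. ((x \<bullet> g!i) / (norm (g!i))^2) * (g ! i \<bullet> g ! m))"
    by (rule sum.mono_neutral_right) (use assms in \<open>auto simp: orthogonal_list_def\<close>)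
  also have "\<dots> = x \<bullet> g ! m"
    by (cases "g ! m = 0") (auto simp: power2_norm_eq_inner)
  finally show ?thesis unfolding gs_residual_def by (simp add: inner_diff_left)
qed

lemma diff_gs_residual_in_span: "x - gs_residual g x \<in> span (set g)"
  unfolding gs_residual_def sum_list_sum_nth
  by (simp, intro span_sum span_scale span_base) simp

lemma inner_span_take_eq_0:
  assumes "orthogonal_list g" and "j < length g" and "y \<in> span (set (take j g))"
  shows "y \<bullet> g ! j = 0"
proof -
  have "orthogonal (g ! j) y"
  proof (rule orthogonal_to_span[OF assms(3)])
    fix z assume "z \<in> set (take j g)"
    then obtain m where "m < j" "z = g ! m"
      by (auto simp: in_set_conv_nth)
    then show "orthogonal (g ! j) z"
      using assms(1,2) unfolding orthogonal_list_def orthogonal_def by auto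
  qed
  then show ?thesis by (simp add: orthogonal_def inner_commute)
qed

lemma power2_norm_eq_sum_orthogonal_list:
  assumes "orthogonal_list g" and "v \<in> span (set g)"
  shows "(norm v)^2 = (\<Sum>j<length g. (v \<bullet> g ! j / norm (g ! j))^2)"
proof -
  define u where "u = gs_residual g v"
  have "u \<in> span (set g)"
    using span_diff[OF assms(2) diff_gs_residual_in_span[of v g]] by (simp add: u_def)
  moreover have "orthogonal u y" if "y \<in> set g" for y
    using that gs_residual_orthogonal[OF assms(1)]
    by (auto simp: u_def orthogonal_def in_set_conv_nth)
  ultimately have "orthogonal u u" by (rule orthogonal_to_span)
  then have v: "v = (\<Sum>i<length g. ((v \<bullet> g!i) / (norm (g!i))^2) *\<^sub>R g!i)"
    by (simp add: u_def gs_residual_def sum_list_sum_nth atLeast0LessThan orthogonal_def)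
  have "(norm v)^2 = v \<bullet> v"
    by (simp add: power2_norm_eq_inner)
  also have "\<dots> = (\<Sum>i<length g. ((v \<bullet> g!i) / (norm (g!i))^2) * (g!i \<bullet> v))"
    by (subst (1) v) (simp add: inner_sum_left)
  also have "\<dots> = (\<Sum>j<length g. (v \<bullet> g ! j / norm (g ! j))^2)"
    by (intro sum.cong refl) (simp add: inner_commute power_divide power2_eq_square)
  finally show ?thesis .
qed

lemma gso_aux_append: "gso_aux acc (xs @ ys) = gso_aux (gso_aux acc xs) ys"
  by (induction xs arbitrary: acc) auto

lemma length_gso_aux: "length (gso_aux acc xs) = length acc + length xs"
  by (induction xs arbitrary: acc) auto

lemma gso_aux_prefix: "\<exists>r. gso_aux acc xs = acc @ r"
proof (induction xs arbitrary: acc)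
  case (Cons x xs)
  obtain r where "gso_aux (acc @ [gs_residual acc x]) xs = (acc @ [gs_residual acc x]) @ r"
    using Cons.IH by blast
  then show ?case by (simp add: gs_residual_def)
qed simp

lemma gso_snoc: "gso (xs @ [x]) = gso xs @ [gs_residual (gso xs) x]"
  unfolding gso_def gs_residual_def by (simp add: gso_aux_append)

lemma length_gso [simp]: "length (gso xs) = length xs"
  by (simp add: gso_def length_gso_aux)

lemma take_gso: "take i (gso xs) = gso (take i xs)"
proof (cases "i \<le> length xs")
  case True
  have "gso xs = gso_aux (gso (take i xs)) (drop i xs)"
    unfolding gso_def gso_aux_append[symmetric] by simp
  moreover obtain r where "gso_aux (gso (take i xs)) (drop i xs) = gso (take i xs) @ r"
    using gso_aux_prefix by blast
  ultimately show ?thesis using True by simp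
qed simp

lemma gso_nth:
  assumes "i < length bs" shows "gso bs ! i = gs_residual (take i (gso bs)) (bs ! i)"
proof -
  have "take (Suc i) bs = take i bs @ [bs ! i]"
    using assms by (simp add: take_Suc_conv_app_nth)
  then have "take (Suc i) (gso bs) = take i (gso bs) @ [gs_residual (take i (gso bs)) (bs ! i)]"
    by (simp add: take_gso gso_snoc)
  then have "take (Suc i) (gso bs) ! i = gs_residual (take i (gso bs)) (bs ! i)"
    using assms by (simp add: nth_append)
  then show ?thesis by simp
qed

lemma orthogonal_list_gso: "orthogonal_list (gso xs)"
proof (induction xs rule: rev_induct)
  case Nil then show ?case by (simp add: orthogonal_list_def gso_def)
next
  case (snoc x xs)
  let ?g = "gso xs @ [gs_residual (gso xs) x]"
  show ?case unfolding orthogonal_list_def gso_snoc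
  proof (intro allI impI)
    fix i j assume "i < length ?g" "j < length ?g" "i \<noteq> j"
    then consider "i < length xs" "j < length xs" | "i = length xs" "j < length xs"
      | "j = length xs" "i < length xs" by fastforce
    then show "?g ! i \<bullet> ?g ! j = 0"
    proof cases
      case 1 then show ?thesis using snoc \<open>i \<noteq> j\<close> by (simp add: nth_append orthogonal_list_def)
    next
      case 2 then show ?thesis using gs_residual_orthogonal[OF snoc, of j x] by (simp add: nth_append)
    next
      case 3 then show ?thesis
        using gs_residual_orthogonal[OF snoc, of i x] by (simp add: nth_append inner_commute)
    qed
  qed
qed

lemma span_gso: "span (set (gso xs)) = span (set xs)"
proof (induction xs rule: rev_induct)
  case Nil then show ?case by (simp add: gso_def)
next
  case (snoc x xs)
  have "span (insert (gs_residual (gso xs) x) (set (gso xs)))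
      = span (insert (gs_residual (gso xs) x) (set xs))"
    by (simp only: insert_is_Un[of _ "set (gso xs)"] insert_is_Un[of _ "set xs"] span_Un snoc)
  also have "\<dots> = span (insert x (set xs))"
    by (rule eq_span_insert_eq)
      (metis snoc diff_gs_residual_in_span minus_diff_eq span_neg)
  finally show ?case by (simp add: gso_snoc)
qed

lemma basis_diff_gso_in_span:
  assumes "i < length bs" shows "bs ! i - gso bs ! i \<in> span (set (take i (gso bs)))"
  by (subst gso_nth[OF assms]) (rule diff_gs_residual_in_span)

lemma inner_basis_gso_eq_0:
  assumes "i < j" and "j < length bs" shows "bs ! i \<bullet> gso bs ! j = 0"
proof (rule inner_span_take_eq_0[OF orthogonal_list_gso])
  have "gso bs ! i \<in> span (set (take j (gso bs)))"
    using assms by (intro span_base) (auto simp: in_set_conv_nth intro!: exI[of _ i])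
  moreover have "span (set (take i (gso bs))) \<subseteq> span (set (take j (gso bs)))"
    using assms by (intro span_mono) (simp add: set_take_subset_set_take)
  moreover have "bs ! i - gso bs ! i \<in> span (set (take i (gso bs)))"
    using assms by (intro basis_diff_gso_in_span) simp
  ultimately have "gso bs ! i + (bs ! i - gso bs ! i) \<in> span (set (take j (gso bs)))"
    by (meson span_add subsetD)
  then show "bs ! i \<in> span (set (take j (gso bs)))" by simp
qed (use assms in simp)

lemma inner_basis_gso_self:
  assumes "j < length bs" shows "bs ! j \<bullet> gso bs ! j = gso bs ! j \<bullet> gso bs ! j"
proof -
  have "(bs ! j - gso bs ! j) \<bullet> gso bs ! j = 0"
    using inner_span_take_eq_0[OF orthogonal_list_gso] basis_diff_gso_in_span[OF assms] assms
    by simp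
  then show ?thesis by (simp add: inner_diff_left)
qed

lemma gso_nonzero:
  assumes lb: "lattice_basis bs" and j: "j < length bs"
  shows "gso bs ! j \<noteq> 0"
proof
  assume "gso bs ! j = 0"
  then have "bs ! j \<in> span (set (take j bs))"
    using basis_diff_gso_in_span[OF j] by (simp add: take_gso span_gso)
  also have "\<dots> \<subseteq> span (set bs - {bs ! j})"
  proof (rule span_mono)
    have "bs ! j \<notin> set (take j bs)"
    proof
      assume "bs ! j \<in> set (take j bs)"
      then obtain m where "m < j" "bs ! m = bs ! j"
        by (auto simp: in_set_conv_nth)
      then show False
        using lb j nth_eq_iff_index_eq[of bs m j] by (simp add: lattice_basis_def)
    qed
    then show "set (take j bs) \<subseteq> set bs - {bs ! j}"
      using set_take_subset by fastforce
  qed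
  finally have "dependent (set bs)"
    unfolding dependent_def using j by auto
  then show False using lb by (simp add: lattice_basis_def)
qed

lemma inner_proj_perp_eq_0: "proj_perp b x \<bullet> b = 0"
  by (cases "b = 0") (auto simp: proj_perp_def inner_diff_left power2_norm_eq_inner)

lemma gso_aux_Cons_orthogonal:
  assumes "\<forall>v\<in>set acc. v \<bullet> b = 0"
  shows "gso_aux (b # acc) xs = b # gso_aux acc (map (proj_perp b) xs)"
  using assms
proof (induction xs arbitrary: acc)
  case Nil then show ?case by simp
next
  case (Cons x xs)
  define p where "p = proj_perp b x"
  define N where "N = gs_residual acc p"
  have pv: "p \<bullet> v = x \<bullet> v" if "v \<in> set acc" for v
  proof -
    have "b \<bullet> v = 0" using Cons.prems that inner_commute[of b v] by simp
    then show ?thesis by (simp add: p_def proj_perp_def inner_diff_left inner_diff_right inner_commute)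
  qed
  have sums: "(\<Sum>v\<leftarrow>acc. ((p \<bullet> v) / (norm v)^2) *\<^sub>R v) = (\<Sum>v\<leftarrow>acc. ((x \<bullet> v) / (norm v)^2) *\<^sub>R v)"
    by (intro arg_cong[where f=sum_list] map_cong refl) (simp add: pv)
  have N: "x - (\<Sum>v\<leftarrow>b # acc. ((x \<bullet> v) / (norm v)^2) *\<^sub>R v) = N"
    unfolding N_def gs_residual_def sums by (simp add: p_def proj_perp_def)
  have "orthogonal b (p - N)"
    by (rule orthogonal_to_span[OF diff_gs_residual_in_span[of p acc, folded N_def]])
      (use Cons.prems in \<open>auto simp: orthogonal_def inner_commute\<close>)
  then have "N \<bullet> b = 0"
    using inner_proj_perp_eq_0[of b x] by (simp add: p_def orthogonal_def inner_diff_right inner_commute)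
  then have "gso_aux (b # (acc @ [N])) xs = b # gso_aux (acc @ [N]) (map (proj_perp b) xs)"
    using Cons.IH[of "acc @ [N]"] Cons.prems by auto
  moreover have "gso_aux (b # acc) (x # xs) = gso_aux (b # (acc @ [N])) xs"
    using N by simp
  moreover have "gs_residual acc (proj_perp b x) = N"
    by (simp add: N_def p_def)
  ultimately show ?case by (simp add: gs_residual_def)
qed

lemma gso_map_proj_perp: "gso (map (proj_perp b) bs) = tl (gso (b # bs))"
  using gso_aux_Cons_orthogonal[of "[]" b bs] by (simp add: gso_def)

lemma gso_Cons_nth_0: "gso (b # bs) ! 0 = b"
  using gso_aux_prefix[of "[b]" bs] by (auto simp: gso_def)

section \<open>Lattices and Minkowski's bound\<close>

definition gs_coord :: "(real^'n) list \<Rightarrow> nat \<Rightarrow> real^'n \<Rightarrow> real" where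
  "gs_coord bs j v = v \<bullet> gso bs ! j / norm (gso bs ! j)"

lemma gs_coord_add_scaleR: "gs_coord bs j (v + c *\<^sub>R w) = gs_coord bs j v + c * gs_coord bs j w"
  by (simp add: gs_coord_def inner_add_left add_divide_distrib)

lemma gs_coord_diff: "gs_coord bs j (v - w) = gs_coord bs j v - gs_coord bs j w"
  by (simp add: gs_coord_def inner_diff_left diff_divide_distrib)

lemma gs_coord_basis_eq_0: "i < j \<Longrightarrow> j < length bs \<Longrightarrow> gs_coord bs j (bs ! i) = 0"
  by (simp add: gs_coord_def inner_basis_gso_eq_0)

lemma gs_coord_basis_self: "j < length bs \<Longrightarrow> gs_coord bs j (bs ! j) = norm (gso bs ! j)"
  by (simp add: gs_coord_def inner_basis_gso_self power2_norm_eq_inner[symmetric] power2_eq_square)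

lemma norm_le_if_gs_coords_le:
  assumes v: "v \<in> span (set bs)" and coords: "\<And>j. j < length bs \<Longrightarrow> \<bar>gs_coord bs j v\<bar> \<le> lam"
  shows "norm v \<le> sqrt (length bs) * lam"
proof (cases "bs = []")
  case True then show ?thesis using v by simp
next
  case False
  then have "0 \<le> lam" using coords[of 0] by simp
  have "(norm v)^2 = (\<Sum>j<length bs. (gs_coord bs j v)^2)"
    using power2_norm_eq_sum_orthogonal_list[OF orthogonal_list_gso, of v bs] v
    by (simp add: span_gso gs_coord_def)
  also have "\<dots> \<le> (\<Sum>j<length bs. lam^2)"
  proof (intro sum_mono)
    fix j assume "j \<in> {..<length bs}"
    then have "\<bar>gs_coord bs j v\<bar>^2 \<le> lam^2"
      by (intro power_mono coords) simp_all
    then show "(gs_coord bs j v)^2 \<le> lam^2" by simp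
  qed
  also have "\<dots> = (sqrt (length bs) * lam)^2"
    unfolding power_mult_distrib by simp
  finally have "(norm v)^2 \<le> (sqrt (length bs) * lam)^2" .
  then show ?thesis
    by (rule power2_le_imp_le) (use \<open>0 \<le> lam\<close> in simp)
qed

lemma zero_in_lattice_of: "0 \<in> lattice_of bs"
  unfolding lattice_of_def by (auto intro!: exI[of _ "\<lambda>_. 0"])

lemma lattice_of_diff:
  assumes "v \<in> lattice_of bs" and "w \<in> lattice_of bs" shows "v - w \<in> lattice_of bs"
proof -
  obtain z y where "v = (\<Sum>i<length bs. of_int (z i) *\<^sub>R bs ! i)"
    and "w = (\<Sum>i<length bs. of_int (y i) *\<^sub>R bs ! i)"
    using assms unfolding lattice_of_def by blast
  then have "v - w = (\<Sum>i<length bs. of_int (z i - y i) *\<^sub>R bs ! i)"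
    by (simp add: sum_subtractf[symmetric] scaleR_diff_left)
  then show ?thesis
    unfolding lattice_of_def mem_Collect_eq by (intro exI[of _ "\<lambda>i. z i - y i"]) simp
qed

lemma lattice_of_add_multiple:
  assumes "v \<in> lattice_of bs" and "m < length bs"
  shows "v + of_int k *\<^sub>R bs ! m \<in> lattice_of bs"
proof -
  obtain z where z: "v = (\<Sum>i<length bs. of_int (z i) *\<^sub>R bs ! i)"
    using assms(1) unfolding lattice_of_def by blast
  have "(\<Sum>i<length bs. of_int (z i + (if i = m then k else 0)) *\<^sub>R bs ! i)
      = v + (\<Sum>i<length bs. (if i = m then of_int k *\<^sub>R bs ! i else 0))"
    unfolding z sum.distrib[symmetric] by (intro sum.cong refl) (simp add: scaleR_add_left)
  also have "\<dots> = v + of_int k *\<^sub>R bs ! m"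
    using assms(2) by simp
  finally show ?thesis
    unfolding lattice_of_def mem_Collect_eq
    by (intro exI[of _ "\<lambda>i. z i + (if i = m then k else 0)"]) simp
qed

lemma lattice_of_subset_span: "lattice_of bs \<subseteq> span (set bs)"
  unfolding lattice_of_def by clarify (intro span_sum span_scale span_base nth_mem, simp)

lemma lattice_of_shift_gs_coord:
  fixes bs :: "(real^'n) list"
  assumes v: "v \<in> lattice_of bs" and m: "m < length bs" and nz: "gso bs ! m \<noteq> 0"
  shows "\<exists>v'\<in>lattice_of bs. \<lfloor>gs_coord bs m v' / norm (gso bs ! m)\<rfloor> = int k \<and>
    (\<forall>j. m < j \<longrightarrow> j < length bs \<longrightarrow> gs_coord bs j v' = gs_coord bs j v)"
proof -
  define r where "r = norm (gso bs ! m)"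
  define q where "q = gs_coord bs m v / r"
  define v' where "v' = v + of_int (int k - \<lfloor>q\<rfloor>) *\<^sub>R bs ! m"
  have "0 < r" using nz by (simp add: r_def)
  have "v' \<in> lattice_of bs"
    unfolding v'_def using v m by (rule lattice_of_add_multiple)
  moreover have "gs_coord bs m v' = gs_coord bs m v + (real k - of_int \<lfloor>q\<rfloor>) * r"
    unfolding v'_def gs_coord_add_scaleR using m by (simp add: gs_coord_basis_self r_def)
  then have "gs_coord bs m v' / r = real k + (q - of_int \<lfloor>q\<rfloor>)"
    using \<open>0 < r\<close> by (simp add: q_def add_divide_distrib)
  then have "\<lfloor>gs_coord bs m v' / r\<rfloor> = int k"
    by (simp add: floor_eq_iff)
  moreover have "gs_coord bs j v' = gs_coord bs j v" if "m < j" "j < length bs" for j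
    using that by (simp add: v'_def gs_coord_add_scaleR gs_coord_basis_eq_0)
  ultimately show ?thesis by (auto simp: r_def)
qed

lemma lattice_of_meets_gs_box:
  fixes bs :: "(real^'n) list" and k :: "nat \<Rightarrow> nat"
  assumes nz: "\<forall>j<length bs. gso bs ! j \<noteq> 0"
  shows "\<exists>v\<in>lattice_of bs. \<forall>j<length bs. \<lfloor>gs_coord bs j v / norm (gso bs ! j)\<rfloor> = int (k j)"
proof -
  define box where "box m v \<longleftrightarrow>
    (\<forall>j. m \<le> j \<longrightarrow> j < length bs \<longrightarrow> \<lfloor>gs_coord bs j v / norm (gso bs ! j)\<rfloor> = int (k j))" for m v
  have "\<exists>v\<in>lattice_of bs. box m v" if "m \<le> length bs" for m
    using that
  proof (induction m rule: inc_induct)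
    case base then show ?case using zero_in_lattice_of[of bs] by (auto simp: box_def)
  next
    case (step m)
    then obtain v where "v \<in> lattice_of bs" "box (Suc m) v"
      by blast
    moreover obtain v' where "v' \<in> lattice_of bs"
      "\<lfloor>gs_coord bs m v' / norm (gso bs ! m)\<rfloor> = int (k m)"
      "\<forall>j. m < j \<longrightarrow> j < length bs \<longrightarrow> gs_coord bs j v' = gs_coord bs j v"
      using lattice_of_shift_gs_coord[OF \<open>v \<in> lattice_of bs\<close>, of m "k m"] step nz by auto
    ultimately have "box m v'"
      unfolding box_def by (metis Suc_leI le_neq_implies_less)
    with \<open>v' \<in> lattice_of bs\<close> show ?case by blast
  qed
  from this[of 0] show ?thesis by (simp add: box_def)
qed

lemma exists_nat_prod_add_inverse_less_one:
  fixes r :: "nat \<Rightarrow> real"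
  assumes lam: "lam > 0" and prod: "(\<Prod>j<n. r j) < lam ^ n"
  shows "\<exists>a::nat. 0 < a \<and> (\<Prod>j<n. r j / lam + 1 / real a) < 1"
proof -
  have "((\<lambda>a::nat. \<Prod>j<n. r j / lam + 1 / real a) \<longlongrightarrow> (\<Prod>j<n. r j / lam + 0)) sequentially"
    by (intro tendsto_intros)
  moreover have "(\<Prod>j<n. r j / lam + 0) < 1"
    using prod lam by (simp add: prod_dividef divide_less_eq)
  ultimately have "eventually (\<lambda>a. (\<Prod>j<n. r j / lam + 1 / real a) < 1) sequentially"
    by (rule order_tendstoD(2))
  then obtain N where N: "\<And>a. a \<ge> N \<Longrightarrow> (\<Prod>j<n. r j / lam + 1 / real a) < 1"
    unfolding eventually_sequentially by blast
  show ?thesis using N[of "Suc N"] by (intro exI[of _ "Suc N"]) auto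
qed

text \<open>Cells of width \<open>\<lambda>\<close>, \<open>c\<^sub>j\<close> of them in coordinate \<open>j\<close>, cover the range \<open>[0, a r\<^sub>j)\<close>
  of the \<open>a\<^sup>n\<close> boxes of side \<open>r\<^sub>j\<close>; as \<open>\<Prod> r\<^sub>j < \<lambda>\<^sup>n\<close>, for large \<open>a\<close> there are fewer cells than
  boxes.\<close>

lemma exists_cell_counts:
  fixes r :: "nat \<Rightarrow> real"
  assumes lam: "lam > 0" and r: "\<And>j. j < n \<Longrightarrow> r j > 0" and prod: "(\<Prod>j<n. r j) < lam ^ n"
  shows "\<exists>a c. (\<forall>j<n. 0 < c j \<and> real a * r j \<le> lam * real (c j)) \<and> (\<Prod>j<n. c j) < a ^ n"
proof -
  obtain a :: nat where a: "0 < a" and small: "(\<Prod>j<n. r j / lam + 1 / real a) < 1"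
    using exists_nat_prod_add_inverse_less_one[OF lam prod] by blast
  define c where "c j = nat \<lceil>real a * r j / lam\<rceil>" for j
  have pos: "0 < real a * r j / lam" if "j < n" for j
    using a r[OF that] lam by simp
  have c_ge: "real a * r j / lam \<le> real (c j)" if "j < n" for j
    using pos[OF that] by (simp add: c_def)
  have c_le: "real (c j) \<le> real a * (r j / lam + 1 / real a)" if "j < n" for j
  proof -
    have "real (c j) \<le> real a * r j / lam + 1"
      using pos[OF that] of_int_ceiling_le_add_one[of "real a * r j / lam"] by (simp add: c_def)
    also have "\<dots> = real a * (r j / lam + 1 / real a)"
      using a by (simp add: distrib_left)
    finally show ?thesis .
  qed
  have "real (\<Prod>j<n. c j) \<le> (\<Prod>j<n. real a * (r j / lam + 1 / real a))"
    unfolding of_nat_prod by (intro prod_mono) (use c_le in auto)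
  also have "\<dots> = real a ^ n * (\<Prod>j<n. r j / lam + 1 / real a)"
    by (simp add: prod.distrib)
  also have "\<dots> < real a ^ n"
    using small a by simp
  finally have "(\<Prod>j<n. c j) < a ^ n"
    by (simp only: of_nat_less_iff of_nat_power[symmetric])
  moreover have "0 < c j \<and> real a * r j \<le> lam * real (c j)" if "j < n" for j
  proof
    show "0 < c j"
      using c_ge[OF that] pos[OF that] of_nat_0_less_iff by fastforce
    show "real a * r j \<le> lam * real (c j)"
      using c_ge[OF that] lam by (simp add: divide_le_eq mult.commute)
  qed
  ultimately show ?thesis by blast
qed

lemma abs_diff_less_if_same_floor:
  fixes s t \<delta> :: real
  assumes "\<lfloor>s / \<delta>\<rfloor> = \<lfloor>t / \<delta>\<rfloor>" and "0 < \<delta>"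
  shows "\<bar>s - t\<bar> < \<delta>"
proof -
  have "\<bar>s / \<delta> - t / \<delta>\<bar> < 1" using assms(1) by linarith
  then show ?thesis using assms(2) by (simp add: diff_divide_distrib[symmetric])
qed

lemma pigeonhole_PiE_close_pair:
  fixes n a :: nat and c :: "nat \<Rightarrow> nat" and t :: "(nat \<Rightarrow> nat) \<Rightarrow> nat \<Rightarrow> real"
  defines "D \<equiv> PiE {..<n} (\<lambda>_. {..<a})"
  assumes lam: "0 < lam"
    and t: "\<And>k j. k \<in> D \<Longrightarrow> j < n \<Longrightarrow> 0 \<le> t k j \<and> t k j < lam * real (c j)"
    and fewer_cells: "(\<Prod>j<n. c j) < a ^ n"
  shows "\<exists>k\<in>D. \<exists>k'\<in>D. k \<noteq> k' \<and> (\<forall>j<n. \<bar>t k j - t k' j\<bar> < lam)"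
proof -
  define C where "C = PiE {..<n} (\<lambda>j. {..<c j})"
  define cell where "cell k = restrict (\<lambda>j. nat \<lfloor>t k j / lam\<rfloor>) {..<n}" for k
  have "cell ` D \<subseteq> C"
  proof
    fix y assume "y \<in> cell ` D"
    then obtain k where "k \<in> D" "y = cell k" by blast
    have "nat \<lfloor>t k j / lam\<rfloor> < c j" if "j < n" for j
    proof -
      have "t k j / lam < real (c j)"
        using t[OF \<open>k \<in> D\<close> that] lam by (simp add: pos_divide_less_eq mult.commute)
      then have "\<lfloor>t k j / lam\<rfloor> < int (c j)"
        by (simp add: floor_less_iff)
      moreover have "0 \<le> t k j / lam"
        using t[OF \<open>k \<in> D\<close> that] lam by simp
      ultimately show ?thesis
        by (simp add: nat_less_iff)
    qed
    then show "y \<in> C" unfolding \<open>y = cell k\<close> C_def cell_def by auto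
  qed
  moreover have "card C < card D"
    using fewer_cells by (simp add: C_def D_def card_PiE)
  ultimately have "\<not> inj_on cell D"
    using card_inj_on_le[of cell D C] by (auto simp: C_def finite_PiE)
  then obtain k k' where k: "k \<in> D" "k' \<in> D" "k \<noteq> k'" "cell k = cell k'"
    unfolding inj_on_def by blast
  have "\<bar>t k j - t k' j\<bar> < lam" if j: "j < n" for j
  proof -
    have "cell k j = cell k' j" using k(4) by simp
    then have "nat \<lfloor>t k j / lam\<rfloor> = nat \<lfloor>t k' j / lam\<rfloor>"
      using j by (simp add: cell_def)
    then have "\<lfloor>t k j / lam\<rfloor> = \<lfloor>t k' j / lam\<rfloor>"
      using t[OF k(1) j] t[OF k(2) j] lam by (simp add: nat_eq_iff2)
    then show ?thesis
      using lam by (rule abs_diff_less_if_same_floor)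
  qed
  with k show ?thesis by blast
qed

lemma exists_lattice_vector_small_gs_coords:
  fixes bs :: "(real^'n) list"
  assumes nz: "\<forall>j<length bs. gso bs ! j \<noteq> 0" and lam: "lam > 0"
    and vol: "(\<Prod>j<length bs. norm (gso bs ! j)) < lam ^ length bs"
  shows "\<exists>v\<in>lattice_of bs. v \<noteq> 0 \<and> (\<forall>j<length bs. \<bar>gs_coord bs j v\<bar> \<le> lam)"
proof -
  define n where "n = length bs"
  define r where "r j = norm (gso bs ! j)" for j
  have r: "r j > 0" if "j < n" for j
    using nz that by (simp add: r_def n_def)
  obtain a c where c: "\<And>j. j < n \<Longrightarrow> 0 < c j \<and> real a * r j \<le> lam * real (c j)"
    and fewer_cells: "(\<Prod>j<n. c j) < a ^ n"
    using exists_cell_counts[of lam n r, OF lam r] vol by (auto simp: r_def n_def)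
  obtain V where V_lattice: "\<And>k. V k \<in> lattice_of bs"
    and V_floor: "\<And>k j. j < n \<Longrightarrow> \<lfloor>gs_coord bs j (V k) / r j\<rfloor> = int (k j)"
    using lattice_of_meets_gs_box[OF nz] by (simp add: r_def n_def) metis
  have V_box: "real (k j) * r j \<le> gs_coord bs j (V k) \<and> gs_coord bs j (V k) < (real (k j) + 1) * r j"
    if "j < n" for k j
    using V_floor[OF that, of k] r[OF that] by (simp add: floor_eq_iff le_divide_eq divide_less_eq)
  define D where "D = PiE {..<n} (\<lambda>_. {..<a})"
  have "0 \<le> gs_coord bs j (V k) \<and> gs_coord bs j (V k) < lam * real (c j)" if "k \<in> D" "j < n" for k j
  proof -
    have "k j < a"
      using that by (simp add: D_def PiE_iff)
    then have "real (k j) + 1 \<le> real a" by linarith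
    then have "(real (k j) + 1) * r j \<le> real a * r j"
      using r[OF \<open>j < n\<close>] by (intro mult_right_mono) simp_all
    moreover have "0 \<le> real (k j) * r j"
      using r[OF \<open>j < n\<close>] by simp
    ultimately show ?thesis
      using V_box[OF \<open>j < n\<close>, of k] c[OF \<open>j < n\<close>] by linarith
  qed
  then obtain k k' where k: "k \<in> D" "k' \<in> D" "k \<noteq> k'"
    and close: "\<And>j. j < n \<Longrightarrow> \<bar>gs_coord bs j (V k) - gs_coord bs j (V k')\<bar> < lam"
    using pigeonhole_PiE_close_pair[of lam n a "\<lambda>k j. gs_coord bs j (V k)" c] lam fewer_cells
    unfolding D_def by blast
  have "V k \<noteq> V k'"
  proof
    assume "V k = V k'"
    then have "k j = k' j" if "j < n" for j
      using V_floor[OF that, of k] V_floor[OF that, of k'] by simp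
    then have "k = k'"
      using k(1,2) unfolding D_def by (intro PiE_ext) auto
    with k(3) show False ..
  qed
  then show ?thesis
    using lattice_of_diff[OF V_lattice V_lattice, of k k'] close unfolding n_def
    by (intro bexI[of _ "V k - V k'"]) (auto simp: gs_coord_diff less_imp_le)
qed

lemma shortest_in_lattice_norm_le:
  fixes bs :: "(real^'n) list"
  assumes nz: "\<forall>j<length bs. gso bs ! j \<noteq> 0" and v: "shortest_in v (lattice_of bs)"
  shows "norm v \<le> sqrt (length bs) * (\<Prod>j<length bs. norm (gso bs ! j)) powr (1 / length bs)"
proof -
  define n where "n = length bs"
  define vol where "vol = (\<Prod>j<n. norm (gso bs ! j))"
  define G where "G = vol powr (1 / n)"
  have "bs \<noteq> []"
    using v by (auto simp: shortest_in_def lattice_of_def)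
  then have "0 < n" by (simp add: n_def)
  have "0 < vol"
    using nz unfolding vol_def n_def by (intro prod_pos) simp
  then have "0 < G" by (simp add: G_def)
  have G_pow: "G ^ n = vol"
  proof -
    have "G ^ n = G powr real n"
      using \<open>0 < G\<close> by (simp add: powr_realpow)
    also have "\<dots> = vol"
      using \<open>0 < n\<close> \<open>0 < vol\<close> by (simp add: G_def powr_powr)
    finally show ?thesis .
  qed
  have "norm v \<le> sqrt n * G"
  proof (rule dense_ge)
    fix \<mu> assume "sqrt n * G < \<mu>"
    define lam where "lam = \<mu> / sqrt n"
    have "G < lam"
      using \<open>sqrt n * G < \<mu>\<close> \<open>0 < n\<close> by (simp add: lam_def field_simps)
    then have "vol < lam ^ n"
      using \<open>0 < G\<close> \<open>0 < n\<close> G_pow by (metis less_imp_le power_strict_mono not_gr0)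
    then obtain w where "w \<in> lattice_of bs" "w \<noteq> 0" and "\<forall>j<n. \<bar>gs_coord bs j w\<bar> \<le> lam"
      using exists_lattice_vector_small_gs_coords[OF nz] \<open>0 < G\<close> \<open>G < lam\<close>
      unfolding n_def vol_def by (meson less_trans)
    then have "norm w \<le> sqrt n * lam"
      unfolding n_def by (intro norm_le_if_gs_coords_le) (use lattice_of_subset_span in auto)
    also have "\<dots> = \<mu>"
      using \<open>0 < n\<close> by (simp add: lam_def)
    finally show "norm v \<le> \<mu>"
      using v \<open>w \<in> lattice_of bs\<close> \<open>w \<noteq> 0\<close> unfolding shortest_in_def by fastforce
  qed
  then show ?thesis by (simp add: G_def vol_def n_def)
qed

section \<open>HKZ bases\<close>

definition proj_tail :: "(real^'n) list \<Rightarrow> (real^'n) list" where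
  "proj_tail bs = map (proj_perp (hd bs)) (tl bs)"

lemma gso_proj_tail: "gso (proj_tail bs) = tl (gso bs)"
  by (cases bs) (simp add: proj_tail_def gso_def, simp add: proj_tail_def gso_map_proj_perp)

lemma hkz_proj_tail: "hkz bs \<Longrightarrow> hkz (proj_tail bs)"
  by (cases bs) (simp_all add: proj_tail_def)

lemma gso_proj_tail_funpow: "gso ((proj_tail ^^ k) bs) = drop k (gso bs)"
  by (induction k) (simp_all add: gso_proj_tail drop_Suc tl_drop)

lemma hkz_proj_tail_funpow: "hkz bs \<Longrightarrow> hkz ((proj_tail ^^ k) bs)"
  by (induction k) (simp_all add: hkz_proj_tail)

lemma hkz_gso_norm_le:
  fixes bs :: "(real^'n) list"
  assumes lb: "lattice_basis bs" and hkz: "hkz bs" and k: "k < length bs"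
  shows "norm (gso bs ! k) \<le> sqrt (length bs - k) *
    (\<Prod>j<length bs - k. norm (gso bs ! (k + j))) powr (1 / (length bs - k))"
proof -
  define P where "P = (proj_tail ^^ k) bs"
  have gso_P: "gso P = drop k (gso bs)"
    by (simp add: P_def gso_proj_tail_funpow)
  then have len_P: "length P = length bs - k"
    by (metis length_drop length_gso)
  then obtain b rest where P: "P = b # rest"
    using k by (cases P) auto
  have "b = gso bs ! k"
    using gso_P gso_Cons_nth_0[of b rest] k by (simp add: P)
  moreover have "shortest_in b (lattice_of P)"
    using hkz_proj_tail_funpow[OF hkz, of k] by (simp add: P_def[symmetric] P)
  moreover have "\<forall>j<length P. gso P ! j \<noteq> 0"
    using gso_nonzero[OF lb] gso_P len_P by simp
  ultimately show ?thesis
    using shortest_in_lattice_norm_le[of P b] gso_P len_P k by simp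
qed

section \<open>Means of the logarithmic Gram--Schmidt profile\<close>

definition interval_mean :: "(nat \<Rightarrow> real) \<Rightarrow> nat \<Rightarrow> real \<Rightarrow> real" where
  "interval_mean l d x =
     ((1 - (x - of_int \<lfloor>x\<rfloor>)) * l (nat \<lfloor>x\<rfloor>) + (\<Sum>i = nat \<lfloor>x\<rfloor> + 1..d. l i)) / (real d + 1 - x)"

definition piece_mean :: "(nat \<Rightarrow> real) \<Rightarrow> nat \<Rightarrow> nat \<Rightarrow> real \<Rightarrow> real" where
  "piece_mean l d k t = ((1 - t) * l k + (\<Sum>i = k + 1..d. l i)) / (real d + 1 - real k - t)"

definition piece_potential :: "(nat \<Rightarrow> real) \<Rightarrow> nat \<Rightarrow> nat \<Rightarrow> real \<Rightarrow> real" where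
  "piece_potential l d k t = piece_mean l d k t - ln (real d) / 2 * ln (real d - real k - t)"

text \<open>With \<open>l\<^sub>i = ln \<parallel>b\<^sub>i\<^sup>*\<parallel>\<close>, the logarithmic form of \<open>\<parallel>b\<^sub>k\<^sup>*\<parallel> \<le> \<surd>n (\<Prod>\<^sub>i\<^sub>\<ge>\<^sub>k \<parallel>b\<^sub>i\<^sup>*\<parallel>)\<^bsup>1/n\<^esup>\<close> with \<open>n = d + 1 - k\<close>.\<close>

definition hkz_log_profile :: "(nat \<Rightarrow> real) \<Rightarrow> nat \<Rightarrow> bool" where
  "hkz_log_profile l d \<longleftrightarrow> (\<forall>k. 1 \<le> k \<longrightarrow> k < d \<longrightarrow>
     (real d - real k) * l k \<le> (real d + 1 - real k) * ln (real d + 1 - real k) / 2 + (\<Sum>i = k + 1..d. l i))"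

lemma interval_mean_eq_piece_mean:
  assumes "0 \<le> t" and "t < 1"
  shows "interval_mean l d (real k + t) = piece_mean l d k t"
proof -
  have "\<lfloor>real k + t\<rfloor> = int k" using assms by (simp add: floor_eq_iff)
  then show ?thesis unfolding interval_mean_def piece_mean_def by (simp add: algebra_simps)
qed

lemma piece_mean_one:
  assumes "k + 1 \<le> d" shows "piece_mean l d k 1 = piece_mean l d (k + 1) 0"
proof -
  have "(\<Sum>i = k + 1..d. l i) = l (k + 1) + (\<Sum>i = Suc (k + 1)..d. l i)"
    using assms by (rule sum.atLeast_Suc_atMost)
  then show ?thesis unfolding piece_mean_def by (simp add: algebra_simps)
qed

text \<open>Only the lower bound on \<open>B\<close> matters, since the hyperbola increment is nonnegative;
  then \<open>ln\<close> is compared with its tangent at \<open>n - 1 - s\<close>.\<close>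

lemma log_increment_le_hyperbola_increment:
  fixes n m B s t :: real
  assumes n: "2 \<le> n" "n \<le> m" and st: "0 \<le> s" "s \<le> t" "t \<le> 1" "t < n - 1"
    and B: "- (n * ln n / 2) \<le> B"
  shows "ln m / 2 * (ln (n - 1 - t) - ln (n - 1 - s)) \<le> B * (1 / (n - t) - 1 / (n - s))"
proof -
  have pos: "0 < n - s" "0 < n - t" "0 < n - 1 - s" "0 < n - 1 - t" using n st by auto
  define E where "E = (t - s) / ((n - s) * (n - t))"
  have "0 \<le> E" using st pos by (simp add: E_def)
  have E: "1 / (n - t) - 1 / (n - s) = E"
    using pos by (simp add: E_def field_simps)
  have "ln (n - 1 - t) - ln (n - 1 - s) \<le> - ((t - s) / (n - 1 - s))"
    using ln_diff_le[of "n - 1 - t" "n - 1 - s"] pos by (simp add: minus_divide_left)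
  then have tangent: "(t - s) / (n - 1 - s) \<le> ln (n - 1 - s) - ln (n - 1 - t)"
    by linarith
  have "n * (n - 1 - s) \<le> (n - s) * (n - 1)"
    using st n by (simp add: algebra_simps)
  also have "\<dots> \<le> (n - s) * (n - t)"
    using pos st by (intro mult_left_mono) auto
  finally have "n / ((n - s) * (n - t)) \<le> 1 / (n - 1 - s)"
    using pos by (simp add: divide_simps)
  then have "ln n / 2 * (t - s) * (n / ((n - s) * (n - t))) \<le> ln m / 2 * (t - s) * (1 / (n - 1 - s))"
    using n st by (intro mult_mono) auto
  also have "\<dots> = ln m / 2 * ((t - s) / (n - 1 - s))"
    by simp
  also have "\<dots> \<le> ln m / 2 * (ln (n - 1 - s) - ln (n - 1 - t))"
    using tangent n by (intro mult_left_mono) auto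
  finally have "n * ln n / 2 * E \<le> ln m / 2 * (ln (n - 1 - s) - ln (n - 1 - t))"
    by (simp add: E_def mult_ac)
  moreover have "- (n * ln n / 2) * E \<le> B * E"
    using B \<open>0 \<le> E\<close> by (rule mult_right_mono)
  ultimately show ?thesis unfolding E by (simp add: algebra_simps)
qed

lemma piece_potential_mono:
  assumes l: "hkz_log_profile l d" and k: "1 \<le> k" "k < d"
    and st: "0 \<le> s" "s \<le> t" "t \<le> 1" "real k + t < real d"
  shows "piece_potential l d k s \<le> piece_potential l d k t"
proof -
  define n where "n = real d + 1 - real k"
  define B where "B = (\<Sum>i = k + 1..d. l i) - (n - 1) * l k"
  have "2 \<le> n" "n \<le> real d" using k by (simp_all add: n_def)
  have mean: "piece_mean l d k u = l k + B / (n - u)" if "u < n" for u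
  proof -
    have "piece_mean l d k u = (l k * (n - u) + B) / (n - u)"
      unfolding piece_mean_def B_def n_def by (simp add: algebra_simps)
    also have "\<dots> = l k + B / (n - u)"
      using that by (simp add: add_divide_distrib)
    finally show ?thesis .
  qed
  have "- (n * ln n / 2) \<le> B"
    using l k unfolding hkz_log_profile_def by (simp add: B_def n_def algebra_simps)
  then have "ln (real d) / 2 * (ln (n - 1 - t) - ln (n - 1 - s)) \<le> B * (1 / (n - t) - 1 / (n - s))"
    using st \<open>2 \<le> n\<close> \<open>n \<le> real d\<close> by (intro log_increment_le_hyperbola_increment) (auto simp: n_def)
  also have "\<dots> = piece_mean l d k t - piece_mean l d k s"
    using mean[of s] mean[of t] st by (simp add: n_def algebra_simps diff_divide_distrib)
  finally show ?thesis
    unfolding piece_potential_def n_def by (simp add: algebra_simps)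
qed

lemma piece_potential_mono_nat:
  assumes l: "hkz_log_profile l d" and "1 \<le> k" "k \<le> m" "m < d"
  shows "piece_potential l d k 0 \<le> piece_potential l d m 0"
  using assms(3,4)
proof (induction m rule: dec_induct)
  case (step m)
  have "piece_potential l d m 0 \<le> piece_potential l d m 1"
    using step \<open>1 \<le> k\<close> by (intro piece_potential_mono[OF l]) auto
  also have "\<dots> = piece_potential l d (m + 1) 0"
    using step piece_mean_one[of m d l] by (simp add: piece_potential_def algebra_simps)
  finally show ?case using step by simp
qed simp

lemma interval_mean_increment_ge:
  assumes l: "hkz_log_profile l d" and x: "1 \<le> x1" "x1 < x2" "x2 < real d"
  shows "ln (real d) / 2 * (ln (real d - x2) - ln (real d - x1)) \<le> interval_mean l d x2 - interval_mean l d x1"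
proof -
  define k1 where "k1 = nat \<lfloor>x1\<rfloor>"
  define k2 where "k2 = nat \<lfloor>x2\<rfloor>"
  have "real k1 = of_int \<lfloor>x1\<rfloor>" "real k2 = of_int \<lfloor>x2\<rfloor>"
    using x by (simp_all add: k1_def k2_def)
  then have "1 \<le> k1" "k1 \<le> k2" "k2 < d" "x1 - real k1 \<in> {0..<1}" "x2 - real k2 \<in> {0..<1}"
    using x by (simp_all add: k1_def k2_def floor_mono nat_mono) linarith+
  have potential: "interval_mean l d x - ln (real d) / 2 * ln (real d - x) = piece_potential l d k (x - real k)"
    if "x - real k \<in> {0..<1}" for x k
    using interval_mean_eq_piece_mean[of "x - real k" l d k] that by (simp add: piece_potential_def)
  have "piece_potential l d k1 (x1 - real k1) \<le> piece_potential l d k2 (x2 - real k2)"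
  proof (cases "k1 = k2")
    case True
    show ?thesis
      using \<open>1 \<le> k1\<close> \<open>k2 < d\<close> \<open>x1 - real k1 \<in> _\<close> \<open>x2 - real k2 \<in> _\<close> x
      unfolding True by (intro piece_potential_mono[OF l]) auto
  next
    case False
    have "piece_potential l d k1 (x1 - real k1) \<le> piece_potential l d k1 1"
      using False \<open>1 \<le> k1\<close> \<open>k1 \<le> k2\<close> \<open>k2 < d\<close> \<open>x1 - real k1 \<in> _\<close>
      by (intro piece_potential_mono[OF l]) auto
    also have "\<dots> = piece_potential l d (k1 + 1) 0"
      using False \<open>k1 \<le> k2\<close> \<open>k2 < d\<close> piece_mean_one[of k1 d l]
      by (simp add: piece_potential_def algebra_simps)
    also have "\<dots> \<le> piece_potential l d k2 0"
      using False \<open>k1 \<le> k2\<close> \<open>k2 < d\<close> by (intro piece_potential_mono_nat[OF l]) auto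
    also have "\<dots> \<le> piece_potential l d k2 (x2 - real k2)"
      using \<open>1 \<le> k1\<close> \<open>k1 \<le> k2\<close> \<open>k2 < d\<close> \<open>x2 - real k2 \<in> _\<close> x
      by (intro piece_potential_mono[OF l]) auto
    finally show ?thesis .
  qed
  then show ?thesis
    using potential[of x1 k1] potential[of x2 k2] \<open>x1 - real k1 \<in> _\<close> \<open>x2 - real k2 \<in> _\<close>
    by (simp add: algebra_simps)
qed

lemma bstar_norm_pos:
  assumes "lattice_basis bs" and "1 \<le> i" and "i \<le> length bs"
  shows "0 < bstar_norm bs i"
  using gso_nonzero[OF assms(1), of "i - 1"] assms(2,3) by (simp add: bstar_norm_def)

lemma tpi_eq_exp_interval_mean:
  assumes pos: "\<And>i. 1 \<le> i \<Longrightarrow> i \<le> d \<Longrightarrow> 0 < bstar_norm bs i"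
    and x: "1 \<le> x" "x < real d"
  shows "tpi bs x d = exp (interval_mean (\<lambda>i. ln (bstar_norm bs i)) d x)"
proof -
  define k where "k = nat \<lfloor>x\<rfloor>"
  have "real k = of_int \<lfloor>x\<rfloor>" using x by (simp add: k_def)
  then have k: "1 \<le> k" "k \<le> d" using x by linarith+
  define e where "e = 1 - x + of_int \<lfloor>x\<rfloor>"
  define P where "P = (\<Prod>i = k + 1..d. bstar_norm bs i)"
  have "0 < P" using pos k by (auto simp: P_def intro: prod_pos)
  have "ln P = (\<Sum>i = k + 1..d. ln (bstar_norm bs i))"
    unfolding P_def using pos k by (intro ln_prod) (auto simp: less_imp_neq[symmetric])
  define A where "A = bstar_norm bs k powr e * P"
  have "0 < A" using pos[OF k] \<open>0 < P\<close> by (simp add: A_def)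
  have "tpi bs x d = A powr (1 / (real d + 1 - x))"
    by (simp add: tpi_def A_def k_def e_def P_def)
  also have "\<dots> = exp (ln A / (real d + 1 - x))"
    using \<open>0 < A\<close> by (simp add: powr_def)
  also have "ln A = e * ln (bstar_norm bs k) + (\<Sum>i = k + 1..d. ln (bstar_norm bs i))"
    using pos[OF k] \<open>0 < P\<close> \<open>ln P = _\<close> by (simp add: A_def ln_mult_pos)
  also have "e = 1 - (x - of_int \<lfloor>x\<rfloor>)"
    by (simp add: e_def)
  finally show ?thesis
    by (simp add: interval_mean_def k_def)
qed

lemma sum_lessThan_add_eq_atLeastAtMost:
  fixes f :: "nat \<Rightarrow> 'a::comm_monoid_add"
  assumes "k + n = d + 1"
  shows "(\<Sum>j<n. f (k + j)) = (\<Sum>i = k..d. f i)"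
proof -
  have "Suc d - k = n" using assms by simp
  then show ?thesis
    using sum.atLeastLessThan_shift_0[of f k "Suc d"]
    by (simp add: atLeastLessThanSuc_atLeastAtMost atLeast0LessThan comp_def)
qed

lemma hkz_log_profile_ln_bstar_norm:
  assumes lb: "lattice_basis bs" and hkz: "hkz bs" and d: "length bs = d"
  shows "hkz_log_profile (\<lambda>i. ln (bstar_norm bs i)) d"
  unfolding hkz_log_profile_def
proof (intro allI impI)
  fix k assume k: "1 \<le> k" "k < d"
  define n where "n = d + 1 - k"
  define l where "l i = ln (bstar_norm bs i)" for i
  define P where "P = (\<Prod>j<n. bstar_norm bs (k + j))"
  have pos: "0 < bstar_norm bs (k + j)" if "j < n" for j
    using k that d by (intro bstar_norm_pos[OF lb]) (auto simp: n_def)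
  have "0 < P" unfolding P_def using pos by (intro prod_pos) simp
  have "0 < real n" using k by (simp add: n_def)
  have "bstar_norm bs k \<le> sqrt (real n) * P powr (1 / real n)"
    using hkz_gso_norm_le[OF lb hkz, of "k - 1"] k d
    by (simp add: bstar_norm_def P_def n_def Suc_diff_le)
  then have "l k \<le> ln (sqrt (real n) * P powr (1 / real n))"
    using pos[of 0] \<open>0 < P\<close> \<open>0 < real n\<close> by (simp add: l_def)
  also have "\<dots> = ln (real n) / 2 + ln P / real n"
    using \<open>0 < real n\<close> \<open>0 < P\<close> by (simp add: ln_mult_pos ln_sqrt ln_powr)
  also have "ln P = (\<Sum>j<n. l (k + j))"
    unfolding P_def l_def using pos by (intro ln_prod) (auto simp: less_imp_neq[symmetric])
  also have "\<dots> = (\<Sum>i = k..d. l i)"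
    by (rule sum_lessThan_add_eq_atLeastAtMost) (use k in \<open>simp add: n_def\<close>)
  also have "\<dots> = l k + (\<Sum>i = k + 1..d. l i)"
    using k by (simp add: sum.atLeast_Suc_atMost)
  finally have "real n * l k \<le> real n * ln (real n) / 2 + (l k + (\<Sum>i = k + 1..d. l i))"
    using \<open>0 < real n\<close> by (simp add: field_simps)
  moreover have "real n = real d + 1 - real k" using k by (simp add: n_def)
  ultimately show "(real d - real k) * l k \<le> (real d + 1 - real k) * ln (real d + 1 - real k) / 2 +
      (\<Sum>i = k + 1..d. l i)"
    by (simp add: algebra_simps)
qed

theorem lemma5:
  fixes bs :: "(real^'n) list" and d :: nat and x1 x2 :: real
  assumes "lattice_basis bs" and "length bs = d" and "d \<ge> 2"
    and "hkz bs"
    and "1 \<le> x1" and "x1 < x2" and "x2 < real d"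
  shows "tpi bs x2 d \<ge> sqrt (real d) powr (ln ((real d - x2) / (real d - x1))) * tpi bs x1 d"
proof -
  define l where "l i = ln (bstar_norm bs i)" for i
  have tpi: "tpi bs x d = exp (interval_mean l d x)" if "1 \<le> x" "x < real d" for x
    unfolding l_def using bstar_norm_pos[OF assms(1)] assms(2) that
    by (intro tpi_eq_exp_interval_mean) auto
  have "ln (real d) / 2 * (ln (real d - x2) - ln (real d - x1)) \<le> interval_mean l d x2 - interval_mean l d x1"
    using hkz_log_profile_ln_bstar_norm[OF assms(1,4,2)] assms(5-7)
    unfolding l_def by (rule interval_mean_increment_ge)
  moreover have "sqrt (real d) powr (ln ((real d - x2) / (real d - x1)))
      = exp (ln (real d) / 2 * (ln (real d - x2) - ln (real d - x1)))"
    using assms(3,6,7) by (simp add: powr_def ln_sqrt ln_div mult.commute)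
  ultimately show ?thesis
    using assms(5-7) by (simp add: tpi mult_exp_exp)
qed

end
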